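(* With $\mathcal I_1,\dots,\mathcal I_6$ as defined in the context, the following hold: (i) $\mathcal I_2\mathcal I_3^2-4\mathcal I_4\mathcal I_5-\mathcal I_6^2=0$ identically on $\mathfrak{sl}(3,\mathbb C)$; (ii) $\mathcal I_1,\dots,\mathcal I_5$ are algebraically independent, and this relation generates the ideal of all polynomial relations among $\mathcal I_1,\dots,\mathcal I_6$; (iii) the algebra $R=\mathbb C[\mathcal I_1,\dots,\mathcal I_6]$ decomposes as a direct sum of graded vector spaces $R=\mathbb C[\mathcal I_1,\dots,\mathcal I_5]\oplus\mathcal I_6\,\mathbb C[\mathcal I_1,\dots,\mathcal I_5]$ (a Hironaka decomposition with primary invariants $\mathcal I_1,\dots,\mathcal I_5$ and secondary invariants $1,\mathcal I_6$); (iv) the Hilbert series of $R$ (graded by polynomial degree) is $$H(R,q)=\frac{1+q^3}{(1-q)(1-q^2)^2(1-q^3)^2}.$$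
   Context: For $M=(m_{ij})\in\mathfrak{sl}(3,\mathbb C)$ (traceless $3\times3$ complex matrices) define the linear coordinate functions $x_1=m_{12}$, $y_1=m_{21}$, $x_2=m_{23}$, $y_2=m_{32}$, $x_3=m_{13}$, $y_3=m_{31}$, $h_1=m_{11}-m_{22}$, $h_0=\tfrac12(m_{11}+m_{22})-m_{33}$. Define the polynomials $\mathcal I_1=h_0$, $\mathcal I_2=h_1^2+4x_1y_1$, $\mathcal I_3=x_2y_2+x_3y_3$, $\mathcal I_4=h_1y_2y_3+y_1y_2^2-x_1y_3^2$, $\mathcal I_5=h_1x_2x_3+x_1x_2^2-x_3^2y_1$, $\mathcal I_6=h_1(x_2y_2-x_3y_3)-2(y_1y_2x_3+x_1x_2y_3)$. *)

theory Defs
  imports "HOL-Analysis.Analysis" "HOL-Library.Poly_Mapping" "HOL-Library.Function_Algebras"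
          "HOL-Computational_Algebra.Formal_Power_Series"
begin

text \<open>sl(3,C): traceless 3x3 complex matrices. Rows/columns indexed by the
  numeral type 3 (index 3 coincides with 0 in that type; this is just a relabelling).\<close>
definition sl3 :: "(complex^3^3) set" where
  "sl3 = {M. M$1$1 + M$2$2 + M$3$3 = 0}"

definition cx1 :: "complex^3^3 \<Rightarrow> complex" where "cx1 M = M$1$2"
definition cy1 :: "complex^3^3 \<Rightarrow> complex" where "cy1 M = M$2$1"
definition cx2 :: "complex^3^3 \<Rightarrow> complex" where "cx2 M = M$2$3"
definition cy2 :: "complex^3^3 \<Rightarrow> complex" where "cy2 M = M$3$2"
definition cx3 :: "complex^3^3 \<Rightarrow> complex" where "cx3 M = M$1$3"
definition cy3 :: "complex^3^3 \<Rightarrow> complex" where "cy3 M = M$3$1"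
definition ch1 :: "complex^3^3 \<Rightarrow> complex" where "ch1 M = M$1$1 - M$2$2"
definition ch0 :: "complex^3^3 \<Rightarrow> complex" where "ch0 M = (M$1$1 + M$2$2) / 2 - M$3$3"

definition I1 :: "complex^3^3 \<Rightarrow> complex" where "I1 M = ch0 M"
definition I2 :: "complex^3^3 \<Rightarrow> complex" where "I2 M = ch1 M ^ 2 + 4 * cx1 M * cy1 M"
definition I3 :: "complex^3^3 \<Rightarrow> complex" where "I3 M = cx2 M * cy2 M + cx3 M * cy3 M"
definition I4 :: "complex^3^3 \<Rightarrow> complex" where
  "I4 M = ch1 M * cy2 M * cy3 M + cy1 M * cy2 M ^ 2 - cx1 M * cy3 M ^ 2"
definition I5 :: "complex^3^3 \<Rightarrow> complex" where
  "I5 M = ch1 M * cx2 M * cx3 M + cx1 M * cx2 M ^ 2 - cx3 M ^ 2 * cy1 M"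
definition I6 :: "complex^3^3 \<Rightarrow> complex" where
  "I6 M = ch1 M * (cx2 M * cy2 M - cx3 M * cy3 M)
          - 2 * (cy1 M * cy2 M * cx3 M + cx1 M * cx2 M * cy3 M)"

definition Inv :: "nat \<Rightarrow> complex^3^3 \<Rightarrow> complex" where
  "Inv i = (if i = 1 then I1 else if i = 2 then I2 else if i = 3 then I3
            else if i = 4 then I4 else if i = 5 then I5 else if i = 6 then I6 else (\<lambda>_. 0))"

text \<open>Multivariate polynomials over C in variables indexed by nat:
  finitely supported maps from monomials (exponent vectors) to coefficients.\<close>
type_synonym mpoly = "(nat \<Rightarrow>\<^sub>0 nat) \<Rightarrow>\<^sub>0 complex"

definition Var :: "nat \<Rightarrow> mpoly" where
  "Var i = Poly_Mapping.single (Poly_Mapping.single i 1) 1"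

definition vars :: "mpoly \<Rightarrow> nat set" where
  "vars p = (\<Union>m\<in>Poly_Mapping.keys p. Poly_Mapping.keys m)"

definition peval :: "(nat \<Rightarrow> complex) \<Rightarrow> mpoly \<Rightarrow> complex" where
  "peval a p = (\<Sum>m\<in>Poly_Mapping.keys p.
       Poly_Mapping.lookup p m * (\<Prod>i\<in>Poly_Mapping.keys m. a i ^ Poly_Mapping.lookup m i))"

definition polyfun :: "mpoly \<Rightarrow> complex^3^3 \<Rightarrow> complex" where
  "polyfun P = (\<lambda>M. if M \<in> sl3 then peval (\<lambda>i. Inv i M) P else 0)"

definition relpoly :: mpoly where
  "relpoly = Var 2 * Var 3 ^ 2 - 4 * Var 4 * Var 5 - Var 6 ^ 2"

definition Ralg :: "(complex^3^3 \<Rightarrow> complex) set" where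
  "Ralg = polyfun ` {P. vars P \<subseteq> {1..6}}"

definition Rdeg :: "nat \<Rightarrow> (complex^3^3 \<Rightarrow> complex) set" where
  "Rdeg d = {f \<in> Ralg. \<forall>t::complex. \<forall>M\<in>sl3. f (\<chi> i j. t * M$i$j) = t ^ d * f M}"

definition fscale :: "complex \<Rightarrow> ('a \<Rightarrow> complex) \<Rightarrow> ('a \<Rightarrow> complex)" where
  "fscale c f = (\<lambda>x. c * f x)"

definition hilb :: "nat \<Rightarrow> nat" where
  "hilb d = vector_space.dim fscale (Rdeg d)"

end

theory Submission
  imports Defs
begin

(*
  The argument rests on one geometric
  fact (realize_point): every point (b1,...,b5,c) of the hypersurface
  c^2 = b2*b3^2 - 4*b4*b5 with b4 nonzero is the value of (I1,...,I6) at an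
  explicit traceless matrix.  A nonzero polynomial has a non-root (Kronecker
  substitution) and the polynomial ring is an integral domain, so we may choose
  such points generically; this gives (a) the algebraic independence of I1..I5 and
  (b) the directness of C[I1..I5] + I6*C[I1..I5] (evaluate at c and at -c).
  Every polynomial in Y1..Y6 is congruent modulo the relation to A + Y6*B with
  A, B free of Y6; this gives the relation ideal and the spanning half of the
  decomposition.  Finally, I1..I6 are homogeneous of weights 1,2,2,3,3,3, so the
  degree-d component of R has as basis the normal monomials (Y6-degree at most 1)
  of weight d; counting them with generating functions gives the Hilbert series.
*)

section \<open>Evaluation of polynomials\<close>

definition mon :: "(nat \<Rightarrow> complex) \<Rightarrow> (nat \<Rightarrow>\<^sub>0 nat) \<Rightarrow> complex" where
  "mon a m = (\<Prod>i\<in>Poly_Mapping.keys m. a i ^ Poly_Mapping.lookup m i)"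

lemma mon_superset:
  assumes "finite S" "Poly_Mapping.keys m \<subseteq> S"
  shows "mon a m = (\<Prod>i\<in>S. a i ^ Poly_Mapping.lookup m i)"
  unfolding mon_def
  by (rule prod.mono_neutral_left) (use assms in \<open>auto simp: in_keys_iff\<close>)

lemma mon_add: "mon a (m1 + m2) = mon a m1 * mon a m2"
proof -
  let ?S = "Poly_Mapping.keys m1 \<union> Poly_Mapping.keys m2"
  have "mon a (m1 + m2) = (\<Prod>i\<in>?S. a i ^ Poly_Mapping.lookup (m1 + m2) i)"
    by (rule mon_superset) (auto dest: keys_add[THEN subsetD])
  also have "\<dots> = (\<Prod>i\<in>?S. a i ^ Poly_Mapping.lookup m1 i * a i ^ Poly_Mapping.lookup m2 i)"
    by (simp add: lookup_add power_add)
  also have "\<dots> = mon a m1 * mon a m2"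
    by (simp add: prod.distrib mon_superset[of ?S])
  finally show ?thesis .
qed

lemma peval_superset:
  assumes "finite K" "Poly_Mapping.keys P \<subseteq> K"
  shows "peval a P = (\<Sum>m\<in>K. Poly_Mapping.lookup P m * mon a m)"
  unfolding peval_def mon_def[symmetric]
  by (rule sum.mono_neutral_left) (use assms in \<open>auto simp: in_keys_iff\<close>)

lemma peval_add: "peval a (P + Q) = peval a P + peval a Q"
proof -
  let ?K = "Poly_Mapping.keys P \<union> Poly_Mapping.keys Q"
  have "peval a (P + Q) = (\<Sum>m\<in>?K. Poly_Mapping.lookup (P + Q) m * mon a m)"
    by (rule peval_superset) (auto dest: keys_add[THEN subsetD])
  also have "\<dots> = (\<Sum>m\<in>?K. Poly_Mapping.lookup P m * mon a m)
                 + (\<Sum>m\<in>?K. Poly_Mapping.lookup Q m * mon a m)"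
    by (simp add: lookup_add distrib_right sum.distrib)
  also have "\<dots> = peval a P + peval a Q"
    by (simp add: peval_superset[of ?K])
  finally show ?thesis .
qed

lemma peval_diff: "peval a (P - Q) = peval a P - peval a Q"
proof -
  have "peval a (- Q) = - peval a Q"
    by (simp add: peval_def keys_minus sum_negf)
  then show ?thesis
    using peval_add[of a P "- Q"] by simp
qed

lemma peval_single: "peval a (Poly_Mapping.single m c) = c * mon a m"
  by (simp add: peval_def mon_def)

lemma peval_zero [simp]: "peval a 0 = 0"
  by (simp add: peval_def)

lemma peval_sum: "peval a (sum f K) = (\<Sum>k\<in>K. peval a (f k))"
  by (induction K rule: infinite_finite_induct) (auto simp: peval_add)

lemma mpoly_sum_terms:
  "(P::mpoly) = (\<Sum>m\<in>Poly_Mapping.keys P. Poly_Mapping.single m (Poly_Mapping.lookup P m))"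
  by (rule poly_mapping_eqI) (simp add: lookup_sum lookup_single when_def in_keys_iff)

lemma peval_mult: "peval a (P * Q) = peval a P * peval a Q"
proof -
  have "P * Q = (\<Sum>m\<in>Poly_Mapping.keys P. Poly_Mapping.single m (Poly_Mapping.lookup P m)) *
                (\<Sum>n\<in>Poly_Mapping.keys Q. Poly_Mapping.single n (Poly_Mapping.lookup Q n))"
    using mpoly_sum_terms[of P] mpoly_sum_terms[of Q] by simp
  also have "\<dots> = (\<Sum>m\<in>Poly_Mapping.keys P. \<Sum>n\<in>Poly_Mapping.keys Q.
      Poly_Mapping.single (m + n) (Poly_Mapping.lookup P m * Poly_Mapping.lookup Q n))"
    by (simp add: sum_distrib_left sum_distrib_right mult_single) (rule sum.swap)
  finally have "peval a (P * Q) = (\<Sum>m\<in>Poly_Mapping.keys P. \<Sum>n\<in>Poly_Mapping.keys Q.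
      (Poly_Mapping.lookup P m * mon a m) * (Poly_Mapping.lookup Q n * mon a n))"
    by (simp add: peval_sum peval_single mon_add mult_ac)
  also have "\<dots> = peval a P * peval a Q"
    by (simp add: peval_def mon_def sum_product)
  finally show ?thesis .
qed

lemma peval_numeral [simp]: "peval a (numeral n) = numeral n"
  using peval_single[of a 0 "numeral n"] by (simp add: mon_def)

lemma peval_power: "peval a (P ^ k) = peval a P ^ k"
  by (induction k) (auto simp: peval_mult peval_single[of a 0 1, simplified] mon_def)

lemma peval_Var [simp]: "peval a (Var i) = a i"
  by (simp add: Var_def peval_single mon_def)

lemmas peval_hom = peval_add peval_diff peval_mult peval_power

lemma peval_cong:
  assumes "\<And>i. i \<in> vars P \<Longrightarrow> a i = b i"
  shows "peval a P = peval b P"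
  unfolding peval_def
proof (intro sum.cong refl arg_cong2[where f="(*)"] prod.cong)
  fix m i assume "m \<in> Poly_Mapping.keys P" "i \<in> Poly_Mapping.keys m"
  then have "i \<in> vars P" by (auto simp: vars_def)
  then show "a i ^ Poly_Mapping.lookup m i = b i ^ Poly_Mapping.lookup m i" using assms by simp
qed

lemma vars_single: "vars (Poly_Mapping.single m c) \<subseteq> Poly_Mapping.keys m"
  by (simp add: vars_def)

lemma vars_Var [simp]: "vars (Var i) = {i}"
  by (simp add: vars_def Var_def)

lemma vars_numeral [simp]: "vars (numeral n) = {}"
  using vars_single[of 0 "numeral n"] by (simp add: single_numeral[symmetric] del: single_numeral)

lemma vars_add: "vars P \<subseteq> V \<Longrightarrow> vars Q \<subseteq> V \<Longrightarrow> vars (P + Q) \<subseteq> V"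
  unfolding vars_def using keys_add[of P Q] by blast

lemma vars_diff: "vars P \<subseteq> V \<Longrightarrow> vars Q \<subseteq> V \<Longrightarrow> vars (P - Q) \<subseteq> V"
  using vars_add[of P V "- Q"] by (simp add: vars_def keys_minus)

lemma vars_mult:
  assumes "vars P \<subseteq> V" "vars Q \<subseteq> V" shows "vars (P * Q) \<subseteq> V"
proof
  fix i assume "i \<in> vars (P * Q)"
  then obtain m where m: "m \<in> Poly_Mapping.keys (P * Q)" "i \<in> Poly_Mapping.keys m"
    by (auto simp: vars_def)
  then obtain a b where ab: "a \<in> Poly_Mapping.keys P" "b \<in> Poly_Mapping.keys Q" "m = a + b"
    using keys_mult[of P Q] by blast
  then have "i \<in> Poly_Mapping.keys a \<or> i \<in> Poly_Mapping.keys b"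
    using m(2) keys_add[of a b] by auto
  with ab assms show "i \<in> V" by (auto simp: vars_def)
qed

lemma vars_power: "vars P \<subseteq> V \<Longrightarrow> vars (P ^ k) \<subseteq> V"
proof (induction k)
  case 0 show ?case by (simp add: vars_def)
next
  case (Suc k) then show ?case by (simp add: vars_mult)
qed

lemma vars_sum: "(\<And>k. k \<in> K \<Longrightarrow> vars (f k) \<subseteq> V) \<Longrightarrow> vars (sum f K) \<subseteq> V"
proof (induction K rule: infinite_finite_induct)
  case (insert x F) then show ?case by (simp add: vars_add)
qed (simp_all add: vars_def)

section \<open>A nonzero polynomial does not vanish everywhere\<close>

lemma sum_shift_digits:
  "(\<Sum>i<Suc n. f i * D^i) = f 0 + D * (\<Sum>i<n. f (Suc i) * (D::nat)^i)"
proof -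
  have "(\<Sum>i<Suc n. f i * D^i) = f 0 * D^0 + (\<Sum>i<n. f (Suc i) * D^(Suc i))"
    by (rule sum.lessThan_Suc_shift)
  also have "(\<Sum>i<n. f (Suc i) * D^(Suc i)) = D * (\<Sum>i<n. f (Suc i) * D^i)"
    unfolding sum_distrib_left by (intro sum.cong refl) simp
  finally show ?thesis by simp
qed

lemma digits_unique:
  fixes f g :: "nat \<Rightarrow> nat"
  assumes "\<forall>i<N. f i < D" "\<forall>i<N. g i < D" "(\<Sum>i<N. f i * D^i) = (\<Sum>i<N. g i * D^i)"
  shows "\<forall>i<N. f i = g i"
  using assms
proof (induction N arbitrary: f g)
  case 0 then show ?case by simp
next
  case (Suc n)
  have f0: "f 0 < D" and g0: "g 0 < D" using Suc.prems by auto
  from Suc.prems(3) have E: "f 0 + D * (\<Sum>i<n. f (Suc i) * D^i) = g 0 + D * (\<Sum>i<n. g (Suc i) * D^i)"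
    by (simp only: sum_shift_digits)
  hence "(f 0 + D * (\<Sum>i<n. f (Suc i) * D^i)) mod D = (g 0 + D * (\<Sum>i<n. g (Suc i) * D^i)) mod D" by simp
  hence h0: "f 0 = g 0" using f0 g0 by simp
  with E have "D * (\<Sum>i<n. f (Suc i) * D^i) = D * (\<Sum>i<n. g (Suc i) * D^i)" by simp
  moreover have "D > 0" using f0 by simp
  ultimately have S: "(\<Sum>i<n. f (Suc i) * D^i) = (\<Sum>i<n. g (Suc i) * D^i)" by simp
  have "\<forall>i<n. f (Suc i) < D" "\<forall>i<n. g (Suc i) < D" using Suc.prems(1,2) by auto
  hence "\<forall>i<n. f (Suc i) = g (Suc i)"
    using Suc.IH[of "\<lambda>i. f (Suc i)" "\<lambda>i. g (Suc i)"] S by blast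
  show ?case
  proof (intro allI impI)
    fix i assume "i < Suc n"
    then show "f i = g i" using h0 \<open>\<forall>i<n. f (Suc i) = g (Suc i)\<close>
      by (cases i) auto
  qed
qed

text \<open>Kronecker substitution: along the curve a i = x^(D^i), for D large, distinct
  monomials of P become distinct powers of x.\<close>
lemma kronecker_substitution:
  fixes P :: mpoly
  obtains \<phi> :: "(nat \<Rightarrow>\<^sub>0 nat) \<Rightarrow> nat" and D :: nat
  where "inj_on \<phi> (Poly_Mapping.keys P)"
    and "\<And>m x. m \<in> Poly_Mapping.keys P \<Longrightarrow> mon (\<lambda>i. x ^ (D ^ i)) m = x ^ \<phi> m"
proof -
  define K where "K = Poly_Mapping.keys P"
  define D where "D = Suc (\<Sum>m\<in>K. \<Sum>i\<in>Poly_Mapping.keys m. Poly_Mapping.lookup m i)"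
  define N where "N = Suc (\<Sum>m\<in>K. \<Sum>i\<in>Poly_Mapping.keys m. i)"
  have finK: "finite K" unfolding K_def by simp
  have digit: "Poly_Mapping.lookup m i < D" if "m \<in> K" for m i
  proof (cases "i \<in> Poly_Mapping.keys m")
    case True
    have "Poly_Mapping.lookup m i \<le> (\<Sum>i\<in>Poly_Mapping.keys m. Poly_Mapping.lookup m i)"
      using True by (intro member_le_sum) auto
    also have "\<dots> \<le> (\<Sum>m\<in>K. \<Sum>i\<in>Poly_Mapping.keys m. Poly_Mapping.lookup m i)"
      using that finK
      by (intro member_le_sum[of m K "\<lambda>m. \<Sum>i\<in>Poly_Mapping.keys m. Poly_Mapping.lookup m i"]) auto
    finally show ?thesis unfolding D_def by simp
  qed (simp add: D_def in_keys_iff)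
  have range: "Poly_Mapping.keys m \<subseteq> {..<N}" if "m \<in> K" for m
  proof
    fix i assume i: "i \<in> Poly_Mapping.keys m"
    have "i \<le> (\<Sum>i\<in>Poly_Mapping.keys m. i)"
      using i by (intro member_le_sum) auto
    also have "\<dots> \<le> (\<Sum>m\<in>K. \<Sum>i\<in>Poly_Mapping.keys m. i)"
      using that finK by (intro member_le_sum[of m K "\<lambda>m. \<Sum>i\<in>Poly_Mapping.keys m. i"]) auto
    finally show "i \<in> {..<N}" unfolding N_def by simp
  qed
  define \<phi> where "\<phi> m = (\<Sum>i<N. Poly_Mapping.lookup m i * D ^ i)" for m
  show ?thesis
  proof
    show "inj_on \<phi> (Poly_Mapping.keys P)"
    proof (rule inj_onI)
      fix m1 m2 assume m: "m1 \<in> Poly_Mapping.keys P" "m2 \<in> Poly_Mapping.keys P" "\<phi> m1 = \<phi> m2"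
      have "\<forall>i<N. Poly_Mapping.lookup m1 i = Poly_Mapping.lookup m2 i"
        by (rule digits_unique[where D=D]) (use m digit in \<open>auto simp: \<phi>_def K_def\<close>)
      moreover have "Poly_Mapping.lookup m1 i = 0 \<and> Poly_Mapping.lookup m2 i = 0" if "\<not> i < N" for i
        using range[of m1] range[of m2] m that by (auto simp: K_def in_keys_iff)
      ultimately show "m1 = m2"
        by (intro poly_mapping_eqI) metis
    qed
  next
    fix m and x :: complex assume m: "m \<in> Poly_Mapping.keys P"
    have "mon (\<lambda>i. x ^ (D ^ i)) m = (\<Prod>i<N. (x ^ (D ^ i)) ^ Poly_Mapping.lookup m i)"
      by (rule mon_superset) (use m range in \<open>auto simp: K_def\<close>)
    also have "\<dots> = (\<Prod>i<N. x ^ (Poly_Mapping.lookup m i * D ^ i))"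
      by (simp add: power_mult[symmetric] mult.commute)
    also have "\<dots> = x ^ \<phi> m" by (simp add: \<phi>_def power_sum)
    finally show "mon (\<lambda>i. x ^ (D ^ i)) m = x ^ \<phi> m" .
  qed
qed

text \<open>Over the infinite field C, a nonzero polynomial has a non-root: along a
  Kronecker curve it becomes a nonzero univariate polynomial.\<close>
lemma nonzero_poly_has_nonroot:
  assumes "P \<noteq> 0"
  obtains a where "peval a P \<noteq> 0"
proof -
  obtain \<phi> D where inj: "inj_on \<phi> (Poly_Mapping.keys P)"
    and monx: "\<And>m x. m \<in> Poly_Mapping.keys P \<Longrightarrow> mon (\<lambda>i. x ^ (D ^ i)) m = x ^ \<phi> m"
    using kronecker_substitution[of P] by blast
  define p where
    "p = (\<Sum>m\<in>Poly_Mapping.keys P. Polynomial.monom (Poly_Mapping.lookup P m) (\<phi> m))"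
  have along_curve: "peval (\<lambda>i. x ^ (D ^ i)) P = poly p x" for x
    unfolding peval_def p_def mon_def[symmetric] by (simp add: monx poly_sum poly_monom)
  obtain m0 where m0: "m0 \<in> Poly_Mapping.keys P"
    using assms by (metis ex_in_conv keys_eq_empty)
  have "coeff p (\<phi> m0) = (\<Sum>m\<in>Poly_Mapping.keys P. if \<phi> m0 = \<phi> m then Poly_Mapping.lookup P m else 0)"
    by (simp add: p_def coeff_sum coeff_monom eq_commute)
  also have "\<dots> = (\<Sum>m\<in>{m0}. Poly_Mapping.lookup P m)"
    by (rule sum.mono_neutral_cong_right) (use m0 inj in \<open>auto dest: inj_onD\<close>)
  also have "\<dots> \<noteq> 0" using m0 by (simp add: in_keys_iff)
  finally have "p \<noteq> 0" by auto
  then have "finite {x. poly p x = 0}" by (rule poly_roots_finite)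
  then obtain x :: complex where "poly p x \<noteq> 0"
    using infinite_UNIV_char_0 by (metis (mono_tags) UNIV_I mem_Collect_eq subsetI finite_subset)
  then show ?thesis using along_curve that by metis
qed

section \<open>The invariants and the relation\<close>

lemma relation_identity: "I2 M * I3 M ^ 2 - 4 * I4 M * I5 M - I6 M ^ 2 = 0"
  unfolding I2_def I3_def I4_def I5_def I6_def by algebra

definition rel_rhs :: mpoly where
  "rel_rhs = Var 2 * Var 3 ^ 2 - 4 * Var 4 * Var 5"

lemma relpoly_eq: "relpoly = rel_rhs - Var 6 ^ 2"
  by (simp add: relpoly_def rel_rhs_def)

lemma vars_rel_rhs: "vars rel_rhs \<subseteq> {1..5}"
  unfolding rel_rhs_def by (intro vars_diff vars_mult vars_power) auto

lemma peval_rel_rhs: "peval b rel_rhs = b 2 * b 3 ^ 2 - 4 * b 4 * b 5"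
  by (simp add: rel_rhs_def peval_hom)

lemma realize_point:
  assumes b4: "b 4 \<noteq> 0" and c: "c ^ 2 = b 2 * b 3 ^ 2 - 4 * b 4 * b 5"
  obtains M where "M \<in> sl3" "\<And>i. i \<in> {1..5} \<Longrightarrow> Inv i M = b i" "I6 M = c"
proof -
  define s where "s = csqrt (b 4)"
  define r where "r = - c / (2 * s)"
  have s: "s \<noteq> 0" "s ^ 2 = b 4" using b4 by (auto simp: s_def)
  have "r ^ 2 = c ^ 2 / (4 * b 4)"
    by (simp add: r_def power_divide power_mult_distrib s(2))
  then have r: "r ^ 2 = (b 2 * b 3 ^ 2 - 4 * b 4 * b 5) / (4 * b 4)"
    by (simp only: c)
  define M :: "complex^3^3" where "M = (\<chi> i j.
      if i = 1 then (if j = 1 then b 1 / 3 else if j = 2 then b 2 / 4 else r)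
      else if i = 2 then (if j = 1 then 1 else if j = 2 then b 1 / 3 else b 3 / s)
      else (if j = 1 then 0 else if j = 2 then s else - 2 * b 1 / 3))"
  have vals: "M \<in> sl3" "I1 M = b 1" "I2 M = b 2" "I3 M = b 3" "I4 M = s ^ 2"
      "I5 M = b 2 * b 3 ^ 2 / (4 * s ^ 2) - r ^ 2" "I6 M = - 2 * s * r"
    using s(1) by (simp_all add: M_def sl3_def I1_def I2_def I3_def I4_def I5_def I6_def
        cx1_def cy1_def cx2_def cy2_def cx3_def cy3_def ch1_def ch0_def field_simps power2_eq_square)
  have "I5 M = b 5" using b4 by (simp add: vals(6) s(2) r field_simps)
  moreover have "I6 M = c" using s(1) by (simp add: vals(7) r_def)
  moreover have "Inv i M = b i" if "i \<in> {1..5}" for i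
  proof -
    have "i = 1 \<or> i = 2 \<or> i = 3 \<or> i = 4 \<or> i = 5" using that by auto
    then show ?thesis using vals s(2) \<open>I5 M = b 5\<close> by (auto simp: Inv_def)
  qed
  ultimately show ?thesis using that vals(1) by blast
qed

lemma polyfun_at_realization:
  assumes "vars P \<subseteq> {1..5}" "M \<in> sl3" "\<And>i. i \<in> {1..5} \<Longrightarrow> Inv i M = b i"
  shows "polyfun P M = peval b P"
  using assms by (auto simp: polyfun_def intro!: peval_cong)

lemma Var_nonzero: "Var i \<noteq> 0"
proof
  assume "Var i = 0"
  then have "vars (Var i) = {}" by (simp add: vars_def)
  then show False by simp
qed

lemma rel_rhs_nonzero: "rel_rhs \<noteq> 0"
proof
  assume "rel_rhs = 0"
  then have "peval (\<lambda>i. if i = 5 then 0 else 1) rel_rhs = 0" by simp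
  then show False by (simp add: peval_rel_rhs)
qed

section \<open>Algebraic independence and the Hironaka decomposition\<close>

theorem primary_invariants_independent:
  assumes "vars P \<subseteq> {1..5}" "polyfun P = (\<lambda>_. 0)"
  shows "P = 0"
proof (rule ccontr)
  assume "P \<noteq> 0"
  then have "P * Var 4 \<noteq> 0" by (simp add: Var_nonzero)
  then obtain b where "peval b (P * Var 4) \<noteq> 0" by (rule nonzero_poly_has_nonroot)
  then have Pb: "peval b P \<noteq> 0" and b4: "b 4 \<noteq> 0" by (simp_all add: peval_mult)
  obtain M where M: "M \<in> sl3" "\<And>i. i \<in> {1..5} \<Longrightarrow> Inv i M = b i"
    using realize_point[of b "csqrt (b 2 * b 3 ^ 2 - 4 * b 4 * b 5)"] b4 by auto
  have "polyfun P M = peval b P" by (rule polyfun_at_realization[OF assms(1) M])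
  with assms(2) Pb show False by simp
qed

text \<open>Directness of C[I1..I5] + I6*C[I1..I5]: for a generic point b of the base there
  are two matrices over it on which I6 takes opposite nonzero values.\<close>
theorem hironaka_direct:
  assumes A: "vars A \<subseteq> {1..5}" and B: "vars B \<subseteq> {1..5}"
    and vanish: "\<And>M. polyfun A M + I6 M * polyfun B M = 0"
  shows "A = 0 \<and> B = 0"
proof -
  have "B = 0"
  proof (rule ccontr)
    assume "B \<noteq> 0"
    then have "B * (Var 4 * rel_rhs) \<noteq> 0" by (simp add: Var_nonzero rel_rhs_nonzero)
    then obtain b where "peval b (B * (Var 4 * rel_rhs)) \<noteq> 0" by (rule nonzero_poly_has_nonroot)
    then have Bb: "peval b B \<noteq> 0" and b4: "b 4 \<noteq> 0"
      and disc: "b 2 * b 3 ^ 2 - 4 * b 4 * b 5 \<noteq> 0"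
      by (simp_all add: peval_mult peval_rel_rhs)
    define c where "c = csqrt (b 2 * b 3 ^ 2 - 4 * b 4 * b 5)"
    have c: "c ^ 2 = b 2 * b 3 ^ 2 - 4 * b 4 * b 5" "(- c) ^ 2 = b 2 * b 3 ^ 2 - 4 * b 4 * b 5"
      by (simp_all add: c_def)
    have value_over_b: "peval b A + c' * peval b B = 0"
      if c': "c' ^ 2 = b 2 * b 3 ^ 2 - 4 * b 4 * b 5" for c'
    proof -
      obtain M where M: "M \<in> sl3" "\<And>i. i \<in> {1..5} \<Longrightarrow> Inv i M = b i" "I6 M = c'"
        using realize_point[of b c'] b4 c' by metis
      show ?thesis
        using vanish[of M] polyfun_at_realization[OF A M(1,2)] polyfun_at_realization[OF B M(1,2)] M(3)
        by simp
    qed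
    have "2 * c * peval b B = 0"
      using value_over_b[OF c(1)] value_over_b[OF c(2)] by (simp add: algebra_simps)
    moreover have "c \<noteq> 0" using disc c(1) by auto
    ultimately show False using Bb by simp
  qed
  moreover have "polyfun A M = 0" for M
    using vanish[of M] by (simp add: \<open>B = 0\<close> polyfun_def split: if_splits)
  ultimately show ?thesis using primary_invariants_independent[OF A] by auto
qed

section \<open>Reduction modulo the relation\<close>

definition has_normal_form :: "mpoly \<Rightarrow> bool" where
  "has_normal_form P \<longleftrightarrow> (\<exists>Q A B. vars Q \<subseteq> {1..6} \<and> vars A \<subseteq> {1..5} \<and> vars B \<subseteq> {1..5} \<and>
      P = Q * relpoly + A + Var 6 * B)"

lemma normal_form_primary: "vars A \<subseteq> {1..5} \<Longrightarrow> has_normal_form A"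
  unfolding has_normal_form_def by (rule exI[of _ 0], rule exI[of _ A], rule exI[of _ 0]) (simp add: vars_def)

lemma normal_form_add:
  assumes "has_normal_form P" "has_normal_form P'" shows "has_normal_form (P + P')"
proof -
  obtain Q A B where 1: "vars Q \<subseteq> {1..6}" "vars A \<subseteq> {1..5}" "vars B \<subseteq> {1..5}"
      "P = Q * relpoly + A + Var 6 * B"
    using assms(1) unfolding has_normal_form_def by blast
  obtain Q' A' B' where 2: "vars Q' \<subseteq> {1..6}" "vars A' \<subseteq> {1..5}" "vars B' \<subseteq> {1..5}"
      "P' = Q' * relpoly + A' + Var 6 * B'"
    using assms(2) unfolding has_normal_form_def by blast
  have "P + P' = (Q + Q') * relpoly + (A + A') + Var 6 * (B + B')"
    using 1(4) 2(4) by (simp add: algebra_simps)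
  moreover have "vars (Q + Q') \<subseteq> {1..6}" "vars (A + A') \<subseteq> {1..5}" "vars (B + B') \<subseteq> {1..5}"
    using 1 2 by (simp_all add: vars_add)
  ultimately show ?thesis unfolding has_normal_form_def by blast
qed

lemma normal_form_mult_primary:
  assumes "has_normal_form P" "vars T \<subseteq> {1..5}" shows "has_normal_form (T * P)"
proof -
  obtain Q A B where 1: "vars Q \<subseteq> {1..6}" "vars A \<subseteq> {1..5}" "vars B \<subseteq> {1..5}"
      "P = Q * relpoly + A + Var 6 * B"
    using assms(1) unfolding has_normal_form_def by blast
  have "T * P = (T * Q) * relpoly + T * A + Var 6 * (T * B)"
    using 1(4) by (simp add: algebra_simps)
  moreover have "vars (T * Q) \<subseteq> {1..6}" using assms(2) 1(1) by (intro vars_mult) auto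
  moreover have "vars (T * A) \<subseteq> {1..5}" "vars (T * B) \<subseteq> {1..5}"
    using assms(2) 1(2,3) by (simp_all add: vars_mult)
  ultimately show ?thesis unfolding has_normal_form_def by blast
qed

text \<open>Multiplying by Y6 only needs the relation Y6^2 = rel_rhs - relpoly.\<close>
lemma normal_form_mult_Var6:
  assumes "has_normal_form P" shows "has_normal_form (Var 6 * P)"
proof -
  obtain Q A B where 1: "vars Q \<subseteq> {1..6}" "vars A \<subseteq> {1..5}" "vars B \<subseteq> {1..5}"
      "P = Q * relpoly + A + Var 6 * B"
    using assms(1) unfolding has_normal_form_def by blast
  have "Var 6 * P = (Var 6 * Q - B) * relpoly + B * rel_rhs + Var 6 * A"
    unfolding 1(4) by (simp add: relpoly_eq algebra_simps power2_eq_square)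
  moreover have "vars (Var 6 * Q - B) \<subseteq> {1..6}" using 1(1,3) by (intro vars_diff vars_mult) auto
  moreover have "vars (B * rel_rhs) \<subseteq> {1..5}" using 1(3) vars_rel_rhs by (rule vars_mult)
  ultimately show ?thesis using 1(2) unfolding has_normal_form_def by blast
qed

lemma Var6_power: "Var 6 ^ k = Poly_Mapping.single (Poly_Mapping.single 6 k) 1"
proof (induction k)
  case (Suc k)
  have "Var 6 ^ Suc k = Var 6 * Poly_Mapping.single (Poly_Mapping.single 6 k) 1"
    by (simp add: Suc)
  also have "\<dots> = Poly_Mapping.single (Poly_Mapping.single 6 1 + Poly_Mapping.single 6 k) 1"
    by (simp add: Var_def mult_single)
  also have "Poly_Mapping.single 6 1 + Poly_Mapping.single 6 k = Poly_Mapping.single (6::nat) (Suc k)"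
    by (simp add: single_add[symmetric])
  finally show ?case .
qed simp

lemma normal_form_monomial:
  assumes "Poly_Mapping.keys m \<subseteq> {1..6}"
  shows "has_normal_form (Poly_Mapping.single m c)"
proof -
  define m' where "m' = Poly_Mapping.update 6 0 m"
  define k where "k = Poly_Mapping.lookup m 6"
  have "m = Poly_Mapping.single 6 k + m'"
    by (rule poly_mapping_eqI) (simp add: m'_def k_def lookup_add lookup_update lookup_single when_def)
  then have split: "Poly_Mapping.single m c = Var 6 ^ k * Poly_Mapping.single m' c"
    by (simp add: Var6_power mult_single)
  have "Poly_Mapping.keys m' \<subseteq> {1..5}" using assms by (auto simp: m'_def keys_update)
  then have "vars (Poly_Mapping.single m' c) \<subseteq> {1..5}" using vars_single[of m' c] by blast
  then have "has_normal_form (Var 6 ^ j * Poly_Mapping.single m' c)" for j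
    by (induction j) (simp_all add: normal_form_primary normal_form_mult_Var6 mult.assoc)
  then show ?thesis by (simp add: split)
qed

theorem every_poly_has_normal_form:
  assumes "vars P \<subseteq> {1..6}" shows "has_normal_form P"
proof -
  have "has_normal_form (\<Sum>m\<in>K. Poly_Mapping.single m (Poly_Mapping.lookup P m))"
    if "K \<subseteq> Poly_Mapping.keys P" for K
    using that
  proof (induction K rule: infinite_finite_induct)
    case (insert m K)
    have "Poly_Mapping.keys m \<subseteq> {1..6}" using insert.prems assms by (auto simp: vars_def)
    then show ?case using insert by (simp add: normal_form_add normal_form_monomial)
  qed (simp_all add: normal_form_primary vars_def)
  then show ?thesis using mpoly_sum_terms[of P] by (metis order_refl)
qed

lemma polyfun_normal_form:
  assumes "P = Q * relpoly + A + Var 6 * B"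
  shows "polyfun P M = polyfun A M + I6 M * polyfun B M"
proof -
  have "peval (\<lambda>i. Inv i M) relpoly = 0"
    using relation_identity[of M] by (simp add: relpoly_def peval_hom Inv_def)
  then show ?thesis using assms by (simp add: polyfun_def peval_add peval_mult Inv_def)
qed

theorem relation_generates_ideal:
  assumes "vars P \<subseteq> {1..6}" "polyfun P = (\<lambda>_. 0)"
  shows "\<exists>Q. vars Q \<subseteq> {1..6} \<and> P = Q * relpoly"
proof -
  obtain Q A B where QAB: "vars Q \<subseteq> {1..6}" "vars A \<subseteq> {1..5}" "vars B \<subseteq> {1..5}"
      "P = Q * relpoly + A + Var 6 * B"
    using every_poly_has_normal_form[OF assms(1)] unfolding has_normal_form_def by blast
  have "polyfun A M + I6 M * polyfun B M = 0" for M
    using polyfun_normal_form[OF QAB(4), of M] assms(2) by (simp add: fun_eq_iff)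
  from hironaka_direct[OF QAB(2,3) this] have "A = 0" "B = 0" by auto
  then show ?thesis using QAB by auto
qed

theorem hironaka_span:
  assumes "f \<in> Ralg"
  shows "\<exists>A B. vars A \<subseteq> {1..5} \<and> vars B \<subseteq> {1..5} \<and> f = (\<lambda>M. polyfun A M + I6 M * polyfun B M)"
proof -
  obtain P where P: "vars P \<subseteq> {1..6}" "f = polyfun P" using assms by (auto simp: Ralg_def)
  obtain Q A B where QAB: "vars Q \<subseteq> {1..6}" "vars A \<subseteq> {1..5}" "vars B \<subseteq> {1..5}"
      "P = Q * relpoly + A + Var 6 * B"
    using every_poly_has_normal_form[OF P(1)] unfolding has_normal_form_def by blast
  then show ?thesis using polyfun_normal_form[OF QAB(4)] P(2) by (auto simp: fun_eq_iff)
qed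

section \<open>The weight grading\<close>

text \<open>I_i is homogeneous of degree wt i in the matrix entries; a monomial in the
  invariants therefore has the weighted degree wdeg.\<close>
definition wt :: "nat \<Rightarrow> nat" where
  "wt i = (if i = 1 then 1 else if i = 2 \<or> i = 3 then 2 else 3)"

definition wdeg :: "(nat \<Rightarrow>\<^sub>0 nat) \<Rightarrow> nat" where
  "wdeg m = (\<Sum>i\<in>Poly_Mapping.keys m. Poly_Mapping.lookup m i * wt i)"

lemma wdeg_superset:
  assumes "finite S" "Poly_Mapping.keys m \<subseteq> S"
  shows "wdeg m = (\<Sum>i\<in>S. Poly_Mapping.lookup m i * wt i)"
  unfolding wdeg_def
  by (rule sum.mono_neutral_left) (use assms in \<open>auto simp: in_keys_iff\<close>)

lemma wdeg_add: "wdeg (m1 + m2) = wdeg m1 + wdeg m2"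
proof -
  let ?S = "Poly_Mapping.keys m1 \<union> Poly_Mapping.keys m2"
  have "wdeg (m1 + m2) = (\<Sum>i\<in>?S. Poly_Mapping.lookup (m1 + m2) i * wt i)"
    by (rule wdeg_superset) (auto dest: keys_add[THEN subsetD])
  also have "\<dots> = (\<Sum>i\<in>?S. Poly_Mapping.lookup m1 i * wt i) + (\<Sum>i\<in>?S. Poly_Mapping.lookup m2 i * wt i)"
    by (simp add: lookup_add sum.distrib algebra_simps)
  also have "\<dots> = wdeg m1 + wdeg m2"
    by (simp add: wdeg_superset[of ?S])
  finally show ?thesis .
qed

lemma wdeg_single: "wdeg (Poly_Mapping.single v k) = k * wt v"
  by (simp add: wdeg_def)

definition scale_mat :: "complex \<Rightarrow> complex^3^3 \<Rightarrow> complex^3^3" where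
  "scale_mat t M = (\<chi> i j. t * M$i$j)"

lemma scale_mat_sl3: "M \<in> sl3 \<Longrightarrow> scale_mat t M \<in> sl3"
  by (simp add: scale_mat_def sl3_def ring_distribs[symmetric])

lemma Inv_scale:
  assumes "i \<in> {1..6}" shows "Inv i (scale_mat t M) = t ^ wt i * Inv i M"
proof -
  have "i = 1 \<or> i = 2 \<or> i = 3 \<or> i = 4 \<or> i = 5 \<or> i = 6" using assms by auto
  then show ?thesis
    unfolding Inv_def wt_def I1_def I2_def I3_def I4_def I5_def I6_def scale_mat_def
      cx1_def cy1_def cx2_def cy2_def cx3_def cy3_def ch1_def ch0_def
    by (elim disjE) (simp add: algebra_simps power2_eq_square power3_eq_cube)+
qed

lemma mon_scale:
  assumes "Poly_Mapping.keys m \<subseteq> {1..6}"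
  shows "mon (\<lambda>i. Inv i (scale_mat t M)) m = t ^ wdeg m * mon (\<lambda>i. Inv i M) m"
proof -
  have "mon (\<lambda>i. Inv i (scale_mat t M)) m
      = (\<Prod>i\<in>Poly_Mapping.keys m. t ^ (Poly_Mapping.lookup m i * wt i) * Inv i M ^ Poly_Mapping.lookup m i)"
    unfolding mon_def using assms
    by (intro prod.cong refl)
       (auto simp: Inv_scale power_mult_distrib power_mult[symmetric] mult.commute)
  also have "\<dots> = t ^ wdeg m * mon (\<lambda>i. Inv i M) m"
    by (simp add: prod.distrib power_sum wdeg_def mon_def)
  finally show ?thesis .
qed

definition weighted_part :: "nat \<Rightarrow> mpoly \<Rightarrow> mpoly" where
  "weighted_part d P = (\<Sum>m\<in>{m\<in>Poly_Mapping.keys P. wdeg m = d}.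
      Poly_Mapping.single m (Poly_Mapping.lookup P m))"

text \<open>If P(I1..I6) is a homogeneous function of degree d, it equals the function
  given by the weight-d part of P: compare coefficients of the polynomial
  t \<mapsto> P(I)(tM) in t.\<close>
lemma homogeneous_weighted_part:
  assumes "vars P \<subseteq> {1..6}" "\<And>t M. M \<in> sl3 \<Longrightarrow> polyfun P (scale_mat t M) = t ^ d * polyfun P M"
  shows "polyfun P = polyfun (weighted_part d P)"
proof
  fix M
  show "polyfun P M = polyfun (weighted_part d P) M"
  proof (cases "M \<in> sl3")
    case False then show ?thesis by (simp add: polyfun_def)
  next
    case True
    have keys6: "Poly_Mapping.keys m \<subseteq> {1..6}" if "m \<in> Poly_Mapping.keys P" for m
      using assms(1) that by (auto simp: vars_def)
    define q where "q = (\<Sum>m\<in>Poly_Mapping.keys P.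
        Polynomial.monom (Poly_Mapping.lookup P m * mon (\<lambda>i. Inv i M) m) (wdeg m))"
    have "poly q t = poly (Polynomial.monom (polyfun P M) d) t" for t
    proof -
      have "poly q t = (\<Sum>m\<in>Poly_Mapping.keys P.
          Poly_Mapping.lookup P m * mon (\<lambda>i. Inv i (scale_mat t M)) m)"
        unfolding q_def poly_sum poly_monom
        by (intro sum.cong refl) (simp add: mon_scale[OF keys6] mult_ac)
      also have "\<dots> = polyfun P (scale_mat t M)"
        using scale_mat_sl3[OF True] by (simp add: polyfun_def peval_def mon_def)
      also have "\<dots> = t ^ d * polyfun P M" by (rule assms(2)[OF True])
      finally show ?thesis by (simp add: poly_monom mult.commute)
    qed
    then have q: "q = Polynomial.monom (polyfun P M) d"
      by (simp add: poly_eq_poly_eq_iff[symmetric] fun_eq_iff)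
    have "coeff q d = (\<Sum>m\<in>Poly_Mapping.keys P.
        if wdeg m = d then Poly_Mapping.lookup P m * mon (\<lambda>i. Inv i M) m else 0)"
      by (simp add: q_def coeff_sum coeff_monom eq_commute)
    also have "\<dots> = (\<Sum>m\<in>{m\<in>Poly_Mapping.keys P. wdeg m = d}.
        Poly_Mapping.lookup P m * mon (\<lambda>i. Inv i M) m)"
      by (simp add: sum.inter_filter)
    also have "\<dots> = polyfun (weighted_part d P) M"
      using True by (simp add: polyfun_def weighted_part_def peval_sum peval_single)
    finally show ?thesis using q by simp
  qed
qed

section \<open>A basis of the homogeneous components\<close>

text \<open>Normal monomials: Y^m with Y6 occurring at most once.  By the Hironaka
  decomposition their images in R are linearly independent and span R.\<close>
definition normal_mon :: "(nat \<Rightarrow>\<^sub>0 nat) \<Rightarrow> bool" where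
  "normal_mon m \<longleftrightarrow> Poly_Mapping.keys m \<subseteq> {1..6} \<and> Poly_Mapping.lookup m 6 \<le> 1"

definition normal_mons :: "nat \<Rightarrow> (nat \<Rightarrow>\<^sub>0 nat) set" where
  "normal_mons d = {m. normal_mon m \<and> wdeg m = d}"

definition mono_fun :: "(nat \<Rightarrow>\<^sub>0 nat) \<Rightarrow> complex^3^3 \<Rightarrow> complex" where
  "mono_fun m = polyfun (Poly_Mapping.single m 1)"

lemma normal_mon_terms:
  assumes "vars A \<subseteq> {1..5}" "vars B \<subseteq> {1..5}" "m \<in> Poly_Mapping.keys (A + Var 6 * B)"
  shows "normal_mon m"
proof -
  have "m \<in> Poly_Mapping.keys A \<or> m \<in> Poly_Mapping.keys (Var 6 * B)"
    using assms(3) keys_add[of A "Var 6 * B"] by auto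
  then show ?thesis
  proof
    assume "m \<in> Poly_Mapping.keys A"
    then have "Poly_Mapping.keys m \<subseteq> {1..5}" using assms(1) by (auto simp: vars_def)
    moreover from this have "Poly_Mapping.lookup m 6 = 0" by (auto simp: in_keys_iff)
    ultimately show ?thesis by (auto simp: normal_mon_def)
  next
    assume "m \<in> Poly_Mapping.keys (Var 6 * B)"
    then obtain b where b: "b \<in> Poly_Mapping.keys B" "m = Poly_Mapping.single 6 1 + b"
      using keys_mult[of "Var 6" B] by (auto simp: Var_def)
    then have kb: "Poly_Mapping.keys b \<subseteq> {1..5}" using assms(2) by (auto simp: vars_def)
    then have lookup6: "Poly_Mapping.lookup m 6 = 1" by (auto simp: b(2) lookup_add in_keys_iff)
    have "Poly_Mapping.keys m \<subseteq> insert 6 (Poly_Mapping.keys b)"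
      using keys_add[of "Poly_Mapping.single 6 1" b] by (auto simp: b(2))
    also have "\<dots> \<subseteq> {1..6}" using kb by auto
    finally show ?thesis using lookup6 by (simp add: normal_mon_def)
  qed
qed

lemma normal_poly_split:
  assumes "\<forall>m\<in>Poly_Mapping.keys P. normal_mon m"
  obtains A B where "vars A \<subseteq> {1..5}" "vars B \<subseteq> {1..5}" "P = A + Var 6 * B"
proof -
  define K0 where "K0 = {m\<in>Poly_Mapping.keys P. Poly_Mapping.lookup m 6 = 0}"
  define K1 where "K1 = {m\<in>Poly_Mapping.keys P. Poly_Mapping.lookup m 6 = 1}"
  define drop6 where "drop6 m = Poly_Mapping.update 6 0 m" for m :: "nat \<Rightarrow>\<^sub>0 nat"
  define A where "A = (\<Sum>m\<in>K0. Poly_Mapping.single m (Poly_Mapping.lookup P m))"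
  define B where "B = (\<Sum>m\<in>K1. Poly_Mapping.single (drop6 m) (Poly_Mapping.lookup P m))"
  have "Poly_Mapping.lookup m 6 = 0 \<or> Poly_Mapping.lookup m 6 = 1" if "m \<in> Poly_Mapping.keys P" for m
    using assms that by (auto simp: normal_mon_def)
  then have keys: "Poly_Mapping.keys P = K0 \<union> K1" "K0 \<inter> K1 = {}" "finite K0" "finite K1"
    by (auto simp: K0_def K1_def)
  have "Var 6 * Poly_Mapping.single (drop6 m) c = Poly_Mapping.single m c" if "m \<in> K1" for m c
  proof -
    have "Poly_Mapping.single 6 1 + drop6 m = m"
      using that by (intro poly_mapping_eqI)
        (simp add: K1_def drop6_def lookup_add lookup_update lookup_single when_def)
    then show ?thesis by (simp add: Var_def mult_single)
  qed
  then have "Var 6 * B = (\<Sum>m\<in>K1. Poly_Mapping.single m (Poly_Mapping.lookup P m))"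
    unfolding B_def sum_distrib_left by (intro sum.cong) auto
  then have "P = A + Var 6 * B"
    using mpoly_sum_terms[of P] keys by (simp add: A_def sum.union_disjoint)
  moreover have "vars A \<subseteq> {1..5}"
    unfolding A_def
  proof (intro vars_sum order_trans[OF vars_single])
    fix m assume "m \<in> K0"
    then have "Poly_Mapping.keys m \<subseteq> {1..6}" "6 \<notin> Poly_Mapping.keys m"
      using assms by (auto simp: K0_def normal_mon_def in_keys_iff)
    then have "Poly_Mapping.keys m \<subseteq> {1..6} - {6}" by blast
    also have "{1..6} - {6} = {1..5::nat}" by auto
    finally show "Poly_Mapping.keys m \<subseteq> {1..5}" .
  qed
  moreover have "vars B \<subseteq> {1..5}"
    unfolding B_def
  proof (intro vars_sum order_trans[OF vars_single])
    fix m assume "m \<in> K1"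
    then have "Poly_Mapping.keys m \<subseteq> {1..6}"
      using assms by (auto simp: K1_def normal_mon_def)
    then show "Poly_Mapping.keys (drop6 m) \<subseteq> {1..5}"
      by (auto simp: drop6_def keys_update subset_iff)
  qed
  ultimately show ?thesis using that by blast
qed

lemma polyfun_normal_injective:
  assumes "\<forall>m\<in>Poly_Mapping.keys P. normal_mon m" "polyfun P = (\<lambda>_. 0)"
  shows "P = 0"
proof -
  obtain A B where AB: "vars A \<subseteq> {1..5}" "vars B \<subseteq> {1..5}" "P = A + Var 6 * B"
    using normal_poly_split[OF assms(1)] by blast
  then have "P = 0 * relpoly + A + Var 6 * B" by simp
  from polyfun_normal_form[OF this] assms(2)
  have "polyfun A M + I6 M * polyfun B M = 0" for M by (simp add: fun_eq_iff)
  from hironaka_direct[OF AB(1,2) this] AB(3) show ?thesis by simp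
qed

interpretation FS: vector_space "fscale :: complex \<Rightarrow> (complex^3^3 \<Rightarrow> complex) \<Rightarrow> (complex^3^3 \<Rightarrow> complex)"
  by unfold_locales (auto simp: fscale_def fun_eq_iff algebra_simps)

lemma fun_sum_apply: "(sum g K) x = (\<Sum>k\<in>K. g k x)"
  by (induction K rule: infinite_finite_induct) auto

lemma lincomb_mono_fun:
  "(\<Sum>m\<in>S. fscale (c m) (mono_fun m)) = polyfun (\<Sum>m\<in>S. Poly_Mapping.single m (c m))"
  by (simp add: fun_eq_iff fun_sum_apply fscale_def mono_fun_def polyfun_def peval_sum peval_single)

lemma mono_fun_lincomb_zero:
  assumes "finite S" "\<forall>m\<in>S. normal_mon m" "(\<Sum>m\<in>S. fscale (c m) (mono_fun m)) = 0"
  shows "\<forall>m\<in>S. c m = 0"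
proof
  define P where "P = (\<Sum>m\<in>S. Poly_Mapping.single m (c m))"
  have lookup_P: "Poly_Mapping.lookup P m = (if m \<in> S then c m else 0)" for m
    using assms(1) by (simp add: P_def lookup_sum lookup_single when_def)
  have "\<forall>m\<in>Poly_Mapping.keys P. normal_mon m"
    using assms(2) by (auto simp: in_keys_iff lookup_P split: if_splits)
  moreover have "polyfun P = (\<lambda>_. 0)"
    using assms(3) by (simp add: P_def lincomb_mono_fun zero_fun_def)
  ultimately have "P = 0" by (rule polyfun_normal_injective)
  fix m assume "m \<in> S"
  then show "c m = 0" using lookup_P[of m] \<open>P = 0\<close> by simp
qed

lemma mono_fun_inj: "inj_on mono_fun (normal_mons d)"
proof (rule inj_onI, rule ccontr)
  fix m1 m2 assume m: "m1 \<in> normal_mons d" "m2 \<in> normal_mons d" "mono_fun m1 = mono_fun m2" "m1 \<noteq> m2"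
  define c where "c m = (if m = m1 then 1 else - 1 :: complex)" for m
  have "(\<Sum>m\<in>{m1, m2}. fscale (c m) (mono_fun m)) = 0"
    using m by (simp add: c_def fscale_def fun_eq_iff)
  from mono_fun_lincomb_zero[OF _ _ this] m show False by (simp add: c_def normal_mons_def)
qed

lemma mono_fun_independent: "FS.independent (mono_fun ` normal_mons d)"
  unfolding FS.independent_explicit_finite_subsets
proof (intro allI impI ballI)
  fix S u v assume S: "S \<subseteq> mono_fun ` normal_mons d" "finite S" "(\<Sum>v\<in>S. fscale (u v) v) = 0"
    and v: "v \<in> S"
  define T where "T = {m\<in>normal_mons d. mono_fun m \<in> S}"
  have ST: "S = mono_fun ` T" using S(1) by (auto simp: T_def)
  have injT: "inj_on mono_fun T" using mono_fun_inj by (rule inj_on_subset) (auto simp: T_def)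
  have finT: "finite T" using S(2) ST injT finite_imageD by blast
  have "(\<Sum>m\<in>T. fscale (u (mono_fun m)) (mono_fun m)) = 0"
    using S(3) unfolding ST by (simp add: sum.reindex[OF injT])
  from mono_fun_lincomb_zero[OF finT _ this] have "\<forall>m\<in>T. u (mono_fun m) = 0"
    by (auto simp: T_def normal_mons_def)
  then show "u v = 0" using v ST by auto
qed

lemma mono_fun_in_Rdeg: "m \<in> normal_mons d \<Longrightarrow> mono_fun m \<in> Rdeg d"
proof -
  assume m: "m \<in> normal_mons d"
  have "mono_fun m \<in> Ralg" unfolding mono_fun_def Ralg_def
    using m vars_single[of m 1] by (auto simp: normal_mons_def normal_mon_def)
  moreover have "mono_fun m (\<chi> i j. t * M$i$j) = t ^ d * mono_fun m M" if "M \<in> sl3" for t M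
    using m that scale_mat_sl3[OF that, of t] mon_scale[of m t M]
    by (simp add: mono_fun_def polyfun_def scale_mat_def[symmetric] peval_single
        normal_mons_def normal_mon_def)
  ultimately show ?thesis unfolding Rdeg_def by auto
qed

text \<open>A degree-d element of R is the weight-d part of its normal form, hence a
  combination of normal monomials of weight d.\<close>
lemma Rdeg_spanned: "Rdeg d \<subseteq> FS.span (mono_fun ` normal_mons d)"
proof
  fix f assume f: "f \<in> Rdeg d"
  then have "f \<in> Ralg" by (simp add: Rdeg_def)
  then obtain A B where AB: "vars A \<subseteq> {1..5}" "vars B \<subseteq> {1..5}"
      "f = (\<lambda>M. polyfun A M + I6 M * polyfun B M)"
    using hironaka_span by blast
  define P where "P = A + Var 6 * B"
  have fP: "f = polyfun P"
    using polyfun_normal_form[of P 0 A B] AB(3) by (simp add: P_def fun_eq_iff)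
  have normal: "normal_mon m" if "m \<in> Poly_Mapping.keys P" for m
    using normal_mon_terms[OF AB(1,2)] that by (simp add: P_def)
  have vP: "vars P \<subseteq> {1..6}" using normal by (auto simp: vars_def normal_mon_def)
  have hom: "polyfun P (scale_mat t M) = t ^ d * polyfun P M" if "M \<in> sl3" for t M
    using f that unfolding fP by (auto simp: Rdeg_def scale_mat_def)
  have "f = polyfun (weighted_part d P)" using homogeneous_weighted_part[OF vP hom] fP by simp
  also have "\<dots> = (\<Sum>m\<in>{m\<in>Poly_Mapping.keys P. wdeg m = d}.
      fscale (Poly_Mapping.lookup P m) (mono_fun m))"
    by (simp add: weighted_part_def lincomb_mono_fun)
  also have "\<dots> \<in> FS.span (mono_fun ` normal_mons d)"
    using normal by (intro FS.span_sum FS.span_scale FS.span_base) (auto simp: normal_mons_def)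
  finally show "f \<in> FS.span (mono_fun ` normal_mons d)" .
qed

theorem hilb_eq_card: "hilb d = card (normal_mons d)"
proof -
  have "FS.dim (Rdeg d) = card (mono_fun ` normal_mons d)"
    by (rule FS.dim_unique[OF _ Rdeg_spanned mono_fun_independent refl])
       (auto intro: mono_fun_in_Rdeg)
  then show ?thesis by (simp add: hilb_def card_image[OF mono_fun_inj])
qed

section \<open>Counting normal monomials: the Hilbert series\<close>

definition weighted_mons :: "nat set \<Rightarrow> nat \<Rightarrow> (nat \<Rightarrow>\<^sub>0 nat) set" where
  "weighted_mons V n = {m. Poly_Mapping.keys m \<subseteq> V \<and> wdeg m = n}"

definition geom_fps :: "nat \<Rightarrow> rat fps" where
  "geom_fps w = Abs_fps (\<lambda>n. if w dvd n then 1 else 0)"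

lemma geom_fps_inverse:
  assumes "w > 0" shows "geom_fps w * (1 - fps_X ^ w) = 1"
proof (rule fps_ext)
  fix n
  have "fps_nth (geom_fps w * (1 - fps_X ^ w)) n
      = fps_nth (geom_fps w) n - (if n < w then 0 else fps_nth (geom_fps w) (n - w))"
    by (simp add: algebra_simps fps_X_power_mult_right_nth)
  also have "\<dots> = fps_nth 1 n"
  proof (cases "n < w")
    case True
    then show ?thesis using assms by (cases "n = 0") (auto simp: geom_fps_def dest: dvd_imp_le)
  next
    case False
    then obtain j where "n = w + j" using le_Suc_ex not_less by blast
    then show ?thesis using assms by (auto simp: geom_fps_def)
  qed
  finally show "fps_nth (geom_fps w * (1 - fps_X ^ w)) n = fps_nth 1 n" .
qed

lemma geom_fps_mult_nth:
  assumes "w > 0"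
  shows "fps_nth (geom_fps w * F) n = (\<Sum>k\<in>{k. k * w \<le> n}. fps_nth F (n - k * w))"
proof -
  have "fps_nth (geom_fps w * F) n = (\<Sum>i=0..n. (if w dvd i then 1 else 0) * fps_nth F (n - i))"
    by (simp add: fps_mult_nth geom_fps_def)
  also have "\<dots> = (\<Sum>i=0..n. if w dvd i then fps_nth F (n - i) else 0)"
    by (intro sum.cong) auto
  also have "\<dots> = (\<Sum>i\<in>{i\<in>{0..n}. w dvd i}. fps_nth F (n - i))"
    by (rule sum.inter_filter[symmetric]) simp
  also have "{i\<in>{0..n}. w dvd i} = (\<lambda>k. k * w) ` {k. k * w \<le> n}"
    by (auto elim!: dvdE simp: mult.commute)
  also have "(\<Sum>i\<in>(\<lambda>k. k * w) ` {k. k * w \<le> n}. fps_nth F (n - i))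
      = (\<Sum>k\<in>{k. k * w \<le> n}. fps_nth F (n - k * w))"
    using assms by (subst sum.reindex) (auto simp: inj_on_def)
  finally show ?thesis .
qed

lemma weighted_mons_insert_inj:
  assumes "v \<notin> V"
  shows "inj_on (\<lambda>(k, m). Poly_Mapping.single v k + m)
           (SIGMA k:K. weighted_mons V (f k))"
proof (rule inj_onI, clarify)
  fix k1 m1 k2 m2
  assume m: "m1 \<in> weighted_mons V (f k1)" "m2 \<in> weighted_mons V (f k2)"
    and eq: "Poly_Mapping.single v k1 + m1 = Poly_Mapping.single v k2 + m2"
  have lookup_v: "Poly_Mapping.lookup (Poly_Mapping.single v k + m) v = k"
    if "Poly_Mapping.keys m \<subseteq> V" for k m
  proof -
    have "v \<notin> Poly_Mapping.keys m" using that assms by blast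
    then show ?thesis by (simp add: lookup_add in_keys_iff)
  qed
  have "Poly_Mapping.keys m1 \<subseteq> V" "Poly_Mapping.keys m2 \<subseteq> V"
    using m by (simp_all add: weighted_mons_def)
  then have "k1 = k2"
    using arg_cong[OF eq, of "\<lambda>m. Poly_Mapping.lookup m v"] lookup_v by metis
  with eq show "k1 = k2 \<and> m1 = m2" by simp
qed

lemma weighted_mons_insert_image:
  "(\<lambda>(k, m). Poly_Mapping.single v k + m) ` (SIGMA k:{k. k * wt v \<le> n}. weighted_mons V (n - k * wt v))
     = weighted_mons (insert v V) n"
proof (intro equalityI subsetI)
  fix x assume "x \<in> (\<lambda>(k, m). Poly_Mapping.single v k + m) `
      (SIGMA k:{k. k * wt v \<le> n}. weighted_mons V (n - k * wt v))"
  then obtain k m where km: "k * wt v \<le> n" "m \<in> weighted_mons V (n - k * wt v)"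
      "x = Poly_Mapping.single v k + m"
    by auto
  have "Poly_Mapping.keys x \<subseteq> insert v V"
    using km keys_add[of "Poly_Mapping.single v k" m]
    by (auto simp: weighted_mons_def split: if_splits)
  moreover have "wdeg x = n" using km by (simp add: weighted_mons_def wdeg_add wdeg_single)
  ultimately show "x \<in> weighted_mons (insert v V) n" by (simp add: weighted_mons_def)
next
  fix x assume x: "x \<in> weighted_mons (insert v V) n"
  define k where "k = Poly_Mapping.lookup x v"
  define m where "m = Poly_Mapping.update v 0 x"
  have x_eq: "x = Poly_Mapping.single v k + m"
    by (rule poly_mapping_eqI) (simp add: k_def m_def lookup_add lookup_update lookup_single when_def)
  have "Poly_Mapping.keys m \<subseteq> V" using x by (auto simp: m_def keys_update weighted_mons_def)
  moreover have "wdeg x = k * wt v + wdeg m" using x_eq by (simp add: wdeg_add wdeg_single)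
  ultimately have "(k, m) \<in> (SIGMA k:{k. k * wt v \<le> n}. weighted_mons V (n - k * wt v))"
    using x by (auto simp: weighted_mons_def)
  then show "x \<in> (\<lambda>(k, m). Poly_Mapping.single v k + m) `
      (SIGMA k:{k. k * wt v \<le> n}. weighted_mons V (n - k * wt v))"
    using x_eq by force
qed

lemma weighted_mons_insert:
  assumes "v \<notin> V"
  shows "bij_betw (\<lambda>(k, m). Poly_Mapping.single v k + m)
           (SIGMA k:{k. k * wt v \<le> n}. weighted_mons V (n - k * wt v))
           (weighted_mons (insert v V) n)"
  using weighted_mons_insert_inj[OF assms] weighted_mons_insert_image
  by (rule bij_betw_imageI)

lemma weighted_mons_count:
  assumes "finite V"
  shows "finite (weighted_mons V n)
    \<and> fps_nth (\<Prod>i\<in>V. geom_fps (wt i)) n = of_nat (card (weighted_mons V n))"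
  using assms
proof (induction V arbitrary: n rule: finite_induct)
  case empty
  have "weighted_mons {} n = (if n = 0 then {0} else {})"
    by (auto simp: weighted_mons_def wdeg_def)
  then show ?case by simp
next
  case (insert v V)
  define K where "K = {k. k * wt v \<le> n}"
  have w: "wt v > 0" by (simp add: wt_def)
  have "K \<subseteq> {..n}" using w by (auto simp: K_def intro: order_trans[rotated])
  then have finK: "finite K" by (rule finite_subset) simp
  note bij = weighted_mons_insert[OF insert.hyps(2), of n, folded K_def]
  have finite_sigma: "finite (SIGMA k:K. weighted_mons V (n - k * wt v))"
    using finK insert.IH by auto
  have "card (weighted_mons (insert v V) n) = (\<Sum>k\<in>K. card (weighted_mons V (n - k * wt v)))"
    using bij_betw_same_card[OF bij] finK insert.IH by (simp add: card_SigmaI)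
  moreover have "fps_nth (\<Prod>i\<in>insert v V. geom_fps (wt i)) n
      = (\<Sum>k\<in>K. fps_nth (\<Prod>i\<in>V. geom_fps (wt i)) (n - k * wt v))"
    using insert.hyps by (simp add: geom_fps_mult_nth[OF w] K_def)
  ultimately show ?case
    using insert.IH bij_betw_finite[OF bij] finite_sigma by simp
qed

lemma lookup6_eq_0:
  "Poly_Mapping.keys m \<subseteq> {1..5} \<Longrightarrow> Poly_Mapping.lookup m (6::nat) = 0"
  by (auto simp: in_keys_iff)

lemma normal_mons_decomp:
  "normal_mons d = weighted_mons {1..5} d
     \<union> (if 3 \<le> d then (\<lambda>m. Poly_Mapping.single 6 1 + m) ` weighted_mons {1..5} (d - 3) else {})"
  (is "_ = ?free \<union> ?with6")
proof (intro equalityI subsetI)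
  fix m assume m: "m \<in> normal_mons d"
  then have keys: "Poly_Mapping.keys m \<subseteq> {1..6}" and wd: "wdeg m = d"
    by (auto simp: normal_mons_def normal_mon_def)
  show "m \<in> ?free \<union> ?with6"
  proof (cases "Poly_Mapping.lookup m 6 = 0")
    case True
    then have "Poly_Mapping.keys m \<subseteq> {1..6} - {6}" using keys by (auto simp: in_keys_iff)
    also have "{1..6} - {6} = {1..5::nat}" by auto
    finally show ?thesis using wd by (simp add: weighted_mons_def)
  next
    case False
    then have l1: "Poly_Mapping.lookup m 6 = 1" using m by (simp add: normal_mons_def normal_mon_def)
    define u where "u = Poly_Mapping.update 6 0 m"
    have m_eq: "m = Poly_Mapping.single 6 1 + u"
      by (rule poly_mapping_eqI) (simp add: u_def l1 lookup_add lookup_update lookup_single when_def)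
    have "Poly_Mapping.keys u \<subseteq> {1..6} - {6}" using keys by (auto simp: u_def keys_update)
    also have "{1..6} - {6} = {1..5::nat}" by auto
    finally have ku: "Poly_Mapping.keys u \<subseteq> {1..5}" .
    have "wdeg m = 3 + wdeg u" using m_eq by (simp add: wdeg_add wdeg_single wt_def)
    then show ?thesis using wd m_eq ku by (auto simp: weighted_mons_def)
  qed
next
  fix m assume m: "m \<in> ?free \<union> ?with6"
  show "m \<in> normal_mons d"
  proof (cases "m \<in> ?free")
    case True
    then show ?thesis using lookup6_eq_0[of m]
      by (auto simp: weighted_mons_def normal_mons_def normal_mon_def)
  next
    case False
    with m obtain u where u: "3 \<le> d" "Poly_Mapping.keys u \<subseteq> {1..5}" "wdeg u = d - 3"
        "m = Poly_Mapping.single 6 1 + u"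
      by (auto simp: weighted_mons_def split: if_splits)
    have "Poly_Mapping.keys m \<subseteq> insert 6 (Poly_Mapping.keys u)"
      using keys_add[of "Poly_Mapping.single 6 1" u] u(4) by auto
    also have "\<dots> \<subseteq> {1..6}" using u(2) by auto
    finally have "Poly_Mapping.keys m \<subseteq> {1..6}" .
    moreover have "Poly_Mapping.lookup m 6 = 1"
      using lookup6_eq_0[OF u(2)] u(4) by (simp add: lookup_add)
    moreover have "wdeg m = d" using u by (simp add: wdeg_add wdeg_single wt_def)
    ultimately show ?thesis by (simp add: normal_mons_def normal_mon_def)
  qed
qed

lemma card_normal_mons:
  "card (normal_mons d)
     = card (weighted_mons {1..5} d) + (if 3 \<le> d then card (weighted_mons {1..5} (d - 3)) else 0)"
proof -
  have fin: "finite (weighted_mons {1..5} n)" for n using weighted_mons_count[of "{1..5}" n] by simp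
  have inj: "inj_on (\<lambda>m. Poly_Mapping.single 6 1 + m) X" for X :: "(nat \<Rightarrow>\<^sub>0 nat) set"
    by (simp add: inj_on_def)
  have "Poly_Mapping.lookup m 6 = 0" if "m \<in> weighted_mons {1..5} n" for m n
    using that lookup6_eq_0 unfolding weighted_mons_def by blast
  then have "weighted_mons {1..5} d \<inter> (\<lambda>m. Poly_Mapping.single 6 1 + m) ` weighted_mons {1..5} (d - 3) = {}"
    by (force simp: lookup_add)
  then show ?thesis
    using normal_mons_decomp[of d] card_Un_disjoint[OF fin finite_imageI[OF fin]] card_image[OF inj]
    by simp
qed

theorem hilbert_series:
  "Abs_fps (\<lambda>d. of_nat (hilb d) :: rat)
     = (1 + fps_X ^ 3) / ((1 - fps_X) * (1 - fps_X ^ 2) ^ 2 * (1 - fps_X ^ 3) ^ 2)"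
proof -
  define G where "G = (\<Prod>i\<in>{1..5}. geom_fps (wt i))"
  define den :: "rat fps" where "den = (1 - fps_X) * (1 - fps_X ^ 2) ^ 2 * (1 - fps_X ^ 3) ^ 2"
  have G_nth: "fps_nth G n = of_nat (card (weighted_mons {1..5} n))" for n
    using weighted_mons_count[of "{1..5}" n] by (simp add: G_def)
  have series: "Abs_fps (\<lambda>d. of_nat (hilb d) :: rat) = (1 + fps_X ^ 3) * G"
    by (rule fps_ext)
       (simp add: hilb_eq_card card_normal_mons distrib_right fps_X_power_mult_nth G_nth not_less)
  have "{1..5::nat} = {1, 2, 3, 4, 5}" by auto
  then have "G = geom_fps 1 * (geom_fps 2 * (geom_fps 2 * (geom_fps 3 * geom_fps 3)))"
    by (simp add: G_def wt_def)
  then have "G * den = (geom_fps 1 * (1 - fps_X ^ 1)) * (geom_fps 2 * (1 - fps_X ^ 2))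
      * (geom_fps 2 * (1 - fps_X ^ 2)) * (geom_fps 3 * (1 - fps_X ^ 3)) * (geom_fps 3 * (1 - fps_X ^ 3))"
    by (simp add: den_def power2_eq_square mult_ac)
  also have "\<dots> = 1"
    using geom_fps_inverse[of 1] geom_fps_inverse[of 2] geom_fps_inverse[of 3]
    by (simp del: power_one_right)
  finally have G_den: "G * den = 1" .
  then have "den \<noteq> 0" by auto
  have "(1 + fps_X ^ 3) / den = ((1 + fps_X ^ 3) * G * den) / den"
    by (simp add: G_den mult.assoc)
  also have "\<dots> = (1 + fps_X ^ 3) * G" using \<open>den \<noteq> 0\<close> by (rule nonzero_mult_div_cancel_right)
  finally show ?thesis using series by (simp add: den_def)
qed

lemma Rdeg_finitely_spanned: "\<exists>B. finite B \<and> Rdeg d \<subseteq> module.span fscale B"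
proof -
  have "finite (normal_mons d)"
    using normal_mons_decomp[of d] weighted_mons_count[of "{1..5}"] by auto
  then show ?thesis using Rdeg_spanned[of d] by blast
qed

theorem mainTheorem5:
  shows "(\<forall>M\<in>sl3. I2 M * I3 M ^ 2 - 4 * I4 M * I5 M - I6 M ^ 2 = 0)
    \<and> (\<forall>P. vars P \<subseteq> {1..5} \<longrightarrow> polyfun P = (\<lambda>_. 0) \<longrightarrow> P = 0)
    \<and> (\<forall>P. vars P \<subseteq> {1..6} \<longrightarrow> polyfun P = (\<lambda>_. 0) \<longrightarrow>
          (\<exists>Q. vars Q \<subseteq> {1..6} \<and> P = Q * relpoly))
    \<and> (\<forall>f\<in>Ralg. \<exists>A B. vars A \<subseteq> {1..5} \<and> vars B \<subseteq> {1..5} \<and>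
          f = (\<lambda>M. polyfun A M + I6 M * polyfun B M))
    \<and> (\<forall>A B. vars A \<subseteq> {1..5} \<longrightarrow> vars B \<subseteq> {1..5} \<longrightarrow>
          (\<lambda>M. polyfun A M + I6 M * polyfun B M) = (\<lambda>_. 0) \<longrightarrow>
          polyfun A = (\<lambda>_. 0) \<and> polyfun B = (\<lambda>_. 0))
    \<and> (\<forall>d. \<exists>B. finite B \<and> Rdeg d \<subseteq> module.span fscale B)
    \<and> Abs_fps (\<lambda>d. of_nat (hilb d) :: rat)
        = (1 + fps_X ^ 3) / ((1 - fps_X) * (1 - fps_X ^ 2) ^ 2 * (1 - fps_X ^ 3) ^ 2)"
proof (intro conjI allI ballI impI)
  fix A B assume A: "vars A \<subseteq> {1..5}" and B: "vars B \<subseteq> {1..5}"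
    and vanish: "(\<lambda>M. polyfun A M + I6 M * polyfun B M) = (\<lambda>_. 0)"
  have "A = 0 \<and> B = 0" using hironaka_direct[OF A B] fun_cong[OF vanish] by simp
  then show "polyfun A = (\<lambda>_. 0)" "polyfun B = (\<lambda>_. 0)"
    by (auto simp: polyfun_def)
qed (use relation_identity primary_invariants_independent relation_generates_ideal
         hironaka_span Rdeg_finitely_spanned hilbert_series in auto)

end
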